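(* Let $n,m\ge 1$. Let $H,S\in C^\infty(\mathbb{R}^n)$ be real functions (the Hamiltonian and entropy functions), let $J\in\mathbb{R}^{n\times n}$ be a constant skew-symmetric matrix, let $g\in\mathbb{R}^{n\times m}$ be a constant matrix and $\tau\in\mathbb{R}^m$ a constant vector. Let $\gamma$ be a strictly positive real function of $\left(x,\tfrac{\partial H}{\partial x}(x)\right)$ and $\gamma_{\mathrm{port}}$ a strictly positive real function of $\left(x,\tfrac{\partial H}{\partial x}(x),u\right)$, $x\in\mathbb{R}^n$, $u\in\mathbb{R}^m$. Write $\{S,H\}_J(x)=\frac{\partial S}{\partial x}(x)^{\top}J\frac{\partial H}{\partial x}(x)$ and $$B(x,u)=\left(g^{\top}\tfrac{\partial S}{\partial x}(x)\right)^{\top}u-\tau^{\top}\left(g^{\top}\tfrac{\partial H}{\partial x}(x)\right)$$ (this is the bracket $\{S_{\mathrm{tot}},H_{\mathrm{tot}}\}_{J_{\mathrm{port}}}$ of $S_{\mathrm{tot}}(x,\xi)=S(x)+\tau^\top\xi$ and $H_{\mathrm{tot}}(x,\xi)=H(x)+u^\top\xi$ with respect to $J_{\mathrm{port}}=\left(\begin{smallmatrix}0&g\\-g^\top&0\end{smallmatrix}\right)$). Consider the control system $$\frac{dx}{dt}=\gamma\left(x,\tfrac{\partial H}{\partial x}\right)\{S,H\}_J\,J\frac{\partial H}{\partial x}(x)+\gamma_{\mathrm{port}}\left(x,\tfrac{\partial H}{\partial x},u\right)B(x,u)\,g\,u,$$ $$y=\gamma_{\mathrm{port}}\left(x,\tfrac{\partial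 H}{\partial x},u\right)B(x,u)\,g^{\top}\frac{\partial H}{\partial x}(x).$$ Then along every (differentiable) solution $x(t)$ corresponding to an input $u(t)\in\mathbb{R}^m$, with output $y(t)$, one has the energy balance $$\frac{d}{dt}H(x(t))=y(t)^{\top}u(t)$$ and the entropy balance $$\frac{d}{dt}S(x(t))-\tau^{\top}y(t)=\sigma_{int}+\sigma_{port},$$ where $\sigma_{int}=\gamma\left(x,\tfrac{\partial H}{\partial x}\right)\{S,H\}_J^2\ge 0$ and $\sigma_{port}=\gamma_{\mathrm{port}}\left(x,\tfrac{\partial H}{\partial x},u\right)B(x,u)^2\ge 0$.
   Context: This system is called an Irreversible Port Hamiltonian System with irreversible port map. $\sigma_{int}$ is interpreted as the internal irreversible entropy creation and $\sigma_{port}$ as the irreversible entropy creation at the interface (port) of the system. *)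

theory Defs
  imports "HOL-Analysis.Analysis"
begin

definition partial_deriv :: "'n::finite \<Rightarrow> (real^'n \<Rightarrow> real) \<Rightarrow> real^'n \<Rightarrow> real" where
  "partial_deriv i f x = frechet_derivative f (at x) (axis i 1)"

definition grad :: "(real^'n::finite \<Rightarrow> real) \<Rightarrow> real^'n \<Rightarrow> real^'n" where
  "grad f x = (\<chi> i. partial_deriv i f x)"

fun Ck :: "nat \<Rightarrow> (real^'n::finite \<Rightarrow> real) \<Rightarrow> bool" where
  "Ck 0 f = continuous_on UNIV f"
| "Ck (Suc k) f = ((\<forall>x. f differentiable (at x)) \<and> (\<forall>i. Ck k (partial_deriv i f)))"

definition smooth :: "(real^'n::finite \<Rightarrow> real) \<Rightarrow> bool" where
  "smooth f = (\<forall>k. Ck k f)"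

definition bracket_J :: "(real^'n::finite \<Rightarrow> real) \<Rightarrow> (real^'n \<Rightarrow> real) \<Rightarrow> real^'n^'n \<Rightarrow> real^'n \<Rightarrow> real" where
  "bracket_J S H J x = grad S x \<bullet> (J *v grad H x)"

definition port_bracket :: "(real^'n::finite \<Rightarrow> real) \<Rightarrow> (real^'n \<Rightarrow> real) \<Rightarrow> real^'m::finite^'n \<Rightarrow> real^'m
    \<Rightarrow> real^'n \<Rightarrow> real^'m \<Rightarrow> real" where
  "port_bracket S H g \<tau> x u = (transpose g *v grad S x) \<bullet> u - \<tau> \<bullet> (transpose g *v grad H x)"

end

theory Submission
  imports Defs
begin

text \<open>By the chain rule the rate of change of a function along a trajectory is its gradient
  paired with the velocity. For \<open>H\<close> the internal term vanishes by skew-symmetry of \<open>J\<close>, and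
  the port term pairs to \<open>y\<^sup>T u\<close>. For \<open>S\<close> the internal term is \<open>\<gamma> {S,H}\<^sub>J\<^sup>2\<close> by definition of
  the bracket, while in the port term \<open>(g\<^sup>T \<nabla>S)\<^sup>T u = B + \<tau>\<^sup>T g\<^sup>T \<nabla>H\<close>, which splits it into
  \<open>\<gamma>\<^sub>p\<^sub>o\<^sub>r\<^sub>t B\<^sup>2\<close> and \<open>\<tau>\<^sup>T y\<close>. Both entropy productions are nonnegative since the rates are positive.\<close>

lemma smooth_imp_differentiable:
  assumes "smooth f"
  shows "f differentiable (at x)"
  using assms Ck.simps(2) unfolding smooth_def by blast

lemma frechet_derivative_eq_inner_grad:
  fixes f :: "real^'n \<Rightarrow> real"
  assumes "f differentiable (at x)"
  shows "frechet_derivative f (at x) v = grad f x \<bullet> v"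
proof -
  let ?D = "frechet_derivative f (at x)"
  have "linear ?D"
    using assms frechet_derivative_works has_derivative_linear by blast
  have "?D v = ?D (\<Sum>i\<in>UNIV. v$i *s axis i 1)"
    by (simp add: basis_expansion)
  also have "\<dots> = (\<Sum>i\<in>UNIV. v$i * ?D (axis i 1))"
    using \<open>linear ?D\<close> by (simp add: linear_sum linear_scale scalar_mult_eq_scaleR)
  also have "\<dots> = grad f x \<bullet> v"
    by (simp add: grad_def partial_deriv_def inner_vec_def mult.commute)
  finally show ?thesis .
qed

lemma has_real_derivative_comp_grad:
  fixes f :: "real^'n \<Rightarrow> real"
  assumes f: "f differentiable (at (x t))"
    and x: "(x has_vector_derivative v) (at t)"
  shows "((\<lambda>s. f (x s)) has_real_derivative (grad f (x t) \<bullet> v)) (at t)"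
proof -
  let ?D = "frechet_derivative f (at (x t))"
  have Df: "(f has_derivative ?D) (at (x t))"
    using f frechet_derivative_works by blast
  have Dx: "(x has_derivative (\<lambda>h. h *\<^sub>R v)) (at t)"
    using x has_vector_derivative_def by blast
  have "((f \<circ> x) has_derivative (\<lambda>h. ?D (h *\<^sub>R v))) (at t)"
    using diff_chain_at[OF Dx Df] by (simp add: o_def)
  moreover have "(\<lambda>h. ?D (h *\<^sub>R v)) = (\<lambda>h. (grad f (x t) \<bullet> v) * h)"
    using has_derivative_linear[OF Df]
    by (auto simp: linear_scale frechet_derivative_eq_inner_grad[OF f] mult.commute)
  ultimately show ?thesis
    by (simp add: has_field_derivative_def o_def)
qed

lemma inner_skew_matrix_self:
  fixes J :: "real^'n^'n"
  assumes "transpose J = - J"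
  shows "v \<bullet> (J *v v) = 0"
proof -
  have "v \<bullet> (J *v v) = (transpose J *v v) \<bullet> v"
    by (simp add: dot_lmul_matrix)
  also have "\<dots> = - (v \<bullet> (J *v v))"
    using assms by (simp add: matrix_vector_mult_def inner_vec_def sum_negf mult.commute)
  finally show ?thesis by simp
qed

lemma energy_rate:
  assumes "transpose J = - J"
  shows "grad H x \<bullet> (a *\<^sub>R (J *v grad H x) + b *\<^sub>R (g *v w))
    = (b *\<^sub>R (transpose g *v grad H x)) \<bullet> w"
  using inner_skew_matrix_self[OF assms, of "grad H x"]
  by (simp add: inner_add_right dot_lmul_matrix)

lemma entropy_rate:
  "grad S x \<bullet> (a *\<^sub>R (J *v grad H x) + b *\<^sub>R (g *v w))
    = \<tau> \<bullet> (b *\<^sub>R (transpose g *v grad H x))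
      + a * bracket_J S H J x + b * port_bracket S H g \<tau> x w"
  by (simp add: inner_add_right dot_lmul_matrix bracket_J_def port_bracket_def algebra_simps)

theorem mainTheorem1:
  fixes H S :: "real^'n \<Rightarrow> real"
    and J :: "real^'n^'n"
    and g :: "real^'m^'n"
    and \<tau> :: "real^'m"
    and \<gamma> :: "real^'n \<Rightarrow> real^'n \<Rightarrow> real"
    and \<gamma>_port :: "real^'n \<Rightarrow> real^'n \<Rightarrow> real^'m \<Rightarrow> real"
    and x :: "real \<Rightarrow> real^'n"
    and u :: "real \<Rightarrow> real^'m"
    and y :: "real \<Rightarrow> real^'m"
    and T :: "real set"
  assumes smooth_H: "smooth H"
    and smooth_S: "smooth S"
    and skew: "transpose J = - J"
    and \<gamma>_pos: "\<And>z p. \<gamma> z p > 0"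
    and \<gamma>_port_pos: "\<And>z p v. \<gamma>_port z p v > 0"
    and T_open: "open T"
    and state_eq: "\<And>t. t \<in> T \<Longrightarrow>
        (x has_vector_derivative
           ((\<gamma> (x t) (grad H (x t)) * bracket_J S H J (x t)) *\<^sub>R (J *v grad H (x t))
            + (\<gamma>_port (x t) (grad H (x t)) (u t) * port_bracket S H g \<tau> (x t) (u t)) *\<^sub>R (g *v u t)))
        (at t)"
    and output_eq: "\<And>t. t \<in> T \<Longrightarrow>
        y t = (\<gamma>_port (x t) (grad H (x t)) (u t) * port_bracket S H g \<tau> (x t) (u t))
                *\<^sub>R (transpose g *v grad H (x t))"
  shows "\<forall>t\<in>T.
      ((\<lambda>s. H (x s)) has_real_derivative (y t \<bullet> u t)) (at t)
    \<and> (let \<sigma>_int = \<gamma> (x t) (grad H (x t)) * (bracket_J S H J (x t))\<^sup>2;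
           \<sigma>_port = \<gamma>_port (x t) (grad H (x t)) (u t) * (port_bracket S H g \<tau> (x t) (u t))\<^sup>2
       in ((\<lambda>s. S (x s)) has_real_derivative (\<tau> \<bullet> y t + \<sigma>_int + \<sigma>_port)) (at t)
          \<and> \<sigma>_int \<ge> 0 \<and> \<sigma>_port \<ge> 0)"
proof
  fix t assume "t \<in> T"
  note x' = state_eq[OF \<open>t \<in> T\<close>] and y = output_eq[OF \<open>t \<in> T\<close>]
  have "((\<lambda>s. H (x s)) has_real_derivative (y t \<bullet> u t)) (at t)"
    using has_real_derivative_comp_grad[OF smooth_imp_differentiable[OF smooth_H] x']
    unfolding energy_rate[OF skew] y .
  moreover have "((\<lambda>s. S (x s)) has_real_derivative
      (\<tau> \<bullet> y t + \<gamma> (x t) (grad H (x t)) * (bracket_J S H J (x t))\<^sup>2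
        + \<gamma>_port (x t) (grad H (x t)) (u t) * (port_bracket S H g \<tau> (x t) (u t))\<^sup>2)) (at t)"
    using has_real_derivative_comp_grad[OF smooth_imp_differentiable[OF smooth_S] x']
    unfolding entropy_rate[where \<tau> = \<tau>] y by (simp only: power2_eq_square mult.assoc)
  moreover have "\<gamma> (x t) (grad H (x t)) * (bracket_J S H J (x t))\<^sup>2 \<ge> 0"
    "\<gamma>_port (x t) (grad H (x t)) (u t) * (port_bracket S H g \<tau> (x t) (u t))\<^sup>2 \<ge> 0"
    using \<gamma>_pos \<gamma>_port_pos by (simp_all add: less_imp_le)
  ultimately show "((\<lambda>s. H (x s)) has_real_derivative (y t \<bullet> u t)) (at t)
    \<and> (let \<sigma>_int = \<gamma> (x t) (grad H (x t)) * (bracket_J S H J (x t))\<^sup>2;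
           \<sigma>_port = \<gamma>_port (x t) (grad H (x t)) (u t) * (port_bracket S H g \<tau> (x t) (u t))\<^sup>2
       in ((\<lambda>s. S (x s)) has_real_derivative (\<tau> \<bullet> y t + \<sigma>_int + \<sigma>_port)) (at t)
          \<and> \<sigma>_int \<ge> 0 \<and> \<sigma>_port \<ge> 0)"
    by (simp add: Let_def)
qed

end
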